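(* Let $G$ be a connected finite simple graph, $\mathcal{N}G$ its normal graph algebra over a field $\mathbb{F}$ of characteristic not $2$, and let $\mathfrak{e}=[a,b]$ be an edge of $G$. Then there exists $u\in U_G$ with $u^2=\mathfrak{e}$ if and only if one of the following holds: (1) $\mathfrak{e}$ lies in an odd cycle and $G-\mathfrak{e}$ is bipartite; (2) $\mathfrak{e}$ is a bridge and at least one connected component of $G-\mathfrak{e}$ is bipartite.
   Context: For a finite simple graph $G$ with vertex set $VG$ and edge set $EG$ (edge with endpoints $x,y$ written $[x,y]$), the normal graph algebra $\mathcal{N}G$ is the $\mathbb{F}$-vector space $U_G\oplus\mathfrak{Z}_G$, where $U_G$ has basis $VG$ and $\mathfrak{Z}_G$ has basis $EG$, with commutative bilinear product determined by: for distinct vertices $x,y$, $xy=[x,y]$ if adjacent and $0$ otherwise; $x^2=\sum_{y\sim x}[x,y]$; all products involving an element of $\mathfrak{Z}_G$ are $0$. Equivalently, for $u=\sum_x\theta_x x$, $u^2=\sum_{[x,y]\in EG}(\theta_x+\theta_y)^2[x,y]$. $G-\mathfrak{e}$ denotes $G$ with the edge $\mathfrak{e}$ removed (vertices kept). *)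

theory Defs
  imports Main
begin

definition simple_graph :: "'a set \<Rightarrow> ('a \<Rightarrow> 'a \<Rightarrow> bool) \<Rightarrow> bool" where
  "simple_graph V E \<longleftrightarrow> finite V \<and> (\<forall>x y. E x y \<longrightarrow> x \<in> V \<and> y \<in> V)
     \<and> (\<forall>x y. E x y \<longrightarrow> E y x) \<and> (\<forall>x. \<not> E x x)"

definition edges :: "('a \<Rightarrow> 'a \<Rightarrow> bool) \<Rightarrow> 'a set set" where
  "edges E = {{x, y} | x y. E x y}"

definition reach :: "('a \<Rightarrow> 'a \<Rightarrow> bool) \<Rightarrow> 'a \<Rightarrow> 'a \<Rightarrow> bool" where
  "reach E = E\<^sup>*\<^sup>*"

definition connected_graph :: "'a set \<Rightarrow> ('a \<Rightarrow> 'a \<Rightarrow> bool) \<Rightarrow> bool" where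
  "connected_graph V E \<longleftrightarrow> V \<noteq> {} \<and> (\<forall>x\<in>V. \<forall>y\<in>V. reach E x y)"

definition remove_edge :: "('a \<Rightarrow> 'a \<Rightarrow> bool) \<Rightarrow> 'a \<Rightarrow> 'a \<Rightarrow> ('a \<Rightarrow> 'a \<Rightarrow> bool)" where
  "remove_edge E a b = (\<lambda>x y. E x y \<and> {x, y} \<noteq> {a, b})"

definition components :: "'a set \<Rightarrow> ('a \<Rightarrow> 'a \<Rightarrow> bool) \<Rightarrow> 'a set set" where
  "components V E = {{y \<in> V. reach E x y} | x. x \<in> V}"

definition induced :: "('a \<Rightarrow> 'a \<Rightarrow> bool) \<Rightarrow> 'a set \<Rightarrow> ('a \<Rightarrow> 'a \<Rightarrow> bool)" where
  "induced E C = (\<lambda>x y. E x y \<and> x \<in> C \<and> y \<in> C)"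

definition bipartite :: "'a set \<Rightarrow> ('a \<Rightarrow> 'a \<Rightarrow> bool) \<Rightarrow> bool" where
  "bipartite V E \<longleftrightarrow> (\<exists>A \<subseteq> V. \<forall>x y. E x y \<longrightarrow> (x \<in> A \<longleftrightarrow> y \<notin> A))"

definition is_cycle :: "('a \<Rightarrow> 'a \<Rightarrow> bool) \<Rightarrow> 'a list \<Rightarrow> bool" where
  "is_cycle E c \<longleftrightarrow> distinct c \<and> length c \<ge> 3 \<and>
     (\<forall>i < length c. E (c ! i) (c ! ((i + 1) mod length c)))"

definition edge_in_cycle :: "'a list \<Rightarrow> 'a \<Rightarrow> 'a \<Rightarrow> bool" where
  "edge_in_cycle c a b \<longleftrightarrow> (\<exists>i < length c. {c ! i, c ! ((i + 1) mod length c)} = {a, b})"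

definition in_odd_cycle :: "('a \<Rightarrow> 'a \<Rightarrow> bool) \<Rightarrow> 'a \<Rightarrow> 'a \<Rightarrow> bool" where
  "in_odd_cycle E a b \<longleftrightarrow> (\<exists>c. is_cycle E c \<and> odd (length c) \<and> edge_in_cycle c a b)"

definition is_bridge :: "'a set \<Rightarrow> ('a \<Rightarrow> 'a \<Rightarrow> bool) \<Rightarrow> 'a \<Rightarrow> 'a \<Rightarrow> bool" where
  "is_bridge V E a b \<longleftrightarrow> E a b \<and>
     card (components V (remove_edge E a b)) > card (components V E)"

text \<open>Elements of U_G: coefficient functions \<theta> on vertices, zero
  outside V (u = \<Sum>x. \<theta> x \<cdot> x). Elements of Z_G: coefficient functions on edges (zero
  off the edge set). The product of u,v \<in> U_G, extended bilinearly from
  xy = [x,y] (adjacent), 0 (non-adjacent distinct), x^2 = \<Sum>_{y~x} [x,y],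
  has coefficient (\<theta>_x + \<theta>_y)(\<phi>_x + \<phi>_y) at the edge [x,y].\<close>
definition U_G :: "'a set \<Rightarrow> ('a \<Rightarrow> 'f::field) set" where
  "U_G V = {\<theta>. \<forall>x. x \<notin> V \<longrightarrow> \<theta> x = 0}"

definition nga_mult :: "('a \<Rightarrow> 'a \<Rightarrow> bool) \<Rightarrow> ('a \<Rightarrow> 'f::field) \<Rightarrow> ('a \<Rightarrow> 'f) \<Rightarrow> ('a set \<Rightarrow> 'f)" where
  "nga_mult E \<theta> \<phi> = (\<lambda>e. if e \<in> edges E then (\<Sum>x\<in>e. \<theta> x) * (\<Sum>x\<in>e. \<phi> x) else 0)"

definition edge_vec :: "'a \<Rightarrow> 'a \<Rightarrow> ('a set \<Rightarrow> 'f::field)" where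
  "edge_vec a b = (\<lambda>e. if e = {a, b} then 1 else 0)"

end

(*
  For u = \<Sum>x. \<theta>\<^sub>x x the coefficient of u\<^sup>2 at [x,y] is (\<theta>\<^sub>x + \<theta>\<^sub>y)\<^sup>2, so u\<^sup>2 = [a,b] says
  that \<theta> is sign-alternating on G - e (\<theta>\<^sub>x + \<theta>\<^sub>y = 0 on each of its edges) and, after
  replacing u by -u, that \<theta>\<^sub>a + \<theta>\<^sub>b = 1. A sign-alternating \<theta> is multiplied by (-1)\<^sup>n
  along a walk of length n, so it is \<plusminus>c on each component of G - e, and splitting by the
  sign 2-colours any component where c \<noteq> -c, i.e. c \<noteq> 0 in characteristic \<noteq> 2.
  If a and b are joined in G - e, then \<theta>\<^sub>a = \<theta>\<^sub>b = 1/2, every a-b path in G - e is even and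
  closes with e to an odd cycle, and G - e is connected, hence bipartite; otherwise e is a
  bridge and \<theta> is nonzero at a or b. Conversely, take \<plusminus>1/2 on the sides of a bipartition of
  G - e (a and b lie on the same side because the rest of the odd cycle is an even walk
  in G - e), or \<plusminus>1 on a bipartite component containing a or b and 0 elsewhere.
*)

theory Submission
  imports Defs "HOL-Library.Transitive_Closure_Table"
begin

definition sign_alternating :: "('a \<Rightarrow> 'a \<Rightarrow> bool) \<Rightarrow> ('a \<Rightarrow> 'b::ab_group_add) \<Rightarrow> bool" where
  "sign_alternating R u \<longleftrightarrow> (\<forall>x y. R x y \<longrightarrow> u x + u y = 0)"

lemma two_neq_zero_if_CHAR_neq_2:
  assumes "CHAR('a::{semiring_1, zero_neq_one}) \<noteq> 2"
  shows "(2::'a) \<noteq> 0"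
proof
  assume "(2::'a) = 0"
  then have "CHAR('a) dvd 2"
    using of_nat_eq_0_iff_char_dvd[where ?n = 2 and ?'a = 'a] by simp
  then have "0 < CHAR('a)" "CHAR('a) \<le> 2"
    by (auto intro: dvd_imp_le intro!: gr0I)
  then show False
    using assms CHAR_not_1[where 'a = 'a] by linarith
qed

lemma nga_mult_self_at_edge:
  assumes "simple_graph V E" and "E x y"
  shows "nga_mult E u u {x, y} = (u x + u y)\<^sup>2"
proof -
  have "x \<noteq> y" "{x, y} \<in> edges E"
    using assms unfolding simple_graph_def edges_def by auto
  then show ?thesis
    unfolding nga_mult_def by (simp add: power2_eq_square)
qed

lemma nga_mult_self_eq_edge_vec_iff:
  assumes sg: "simple_graph V E" and ab: "E a b"
  shows "nga_mult E u u = edge_vec a b \<longleftrightarrow>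
    sign_alternating (remove_edge E a b) u \<and> (u a + u b)\<^sup>2 = 1"
proof
  assume sq: "nga_mult E u u = edge_vec a b"
  have "(u x + u y)\<^sup>2 = 0" if "remove_edge E a b x y" for x y
    using that sq nga_mult_self_at_edge[OF sg, of x y u]
    unfolding remove_edge_def edge_vec_def by metis
  then show "sign_alternating (remove_edge E a b) u \<and> (u a + u b)\<^sup>2 = 1"
    using sq nga_mult_self_at_edge[OF sg ab, of u]
    unfolding sign_alternating_def edge_vec_def by (metis zero_eq_power2)
next
  assume alt: "sign_alternating (remove_edge E a b) u \<and> (u a + u b)\<^sup>2 = 1"
  show "nga_mult E u u = edge_vec a b"
  proof
    fix e
    show "nga_mult E u u e = edge_vec a b e"
    proof (cases "e \<in> edges E")
      case True
      then obtain x y where e: "e = {x, y}" "E x y"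
        unfolding edges_def by auto
      then show ?thesis
        using alt nga_mult_self_at_edge[OF sg e(2), of u] nga_mult_self_at_edge[OF sg ab, of u]
        unfolding sign_alternating_def remove_edge_def edge_vec_def by auto
    next
      case False
      moreover have "{a, b} \<in> edges E"
        using ab unfolding edges_def by auto
      ultimately show ?thesis
        unfolding nga_mult_def edge_vec_def by auto
    qed
  qed
qed

lemma square_eq_edge_vec_iff:
  assumes "simple_graph V E" and "E a b"
  shows "(\<exists>u \<in> (U_G V :: ('a \<Rightarrow> 'f::field) set). nga_mult E u u = edge_vec a b) \<longleftrightarrow>
    (\<exists>u \<in> (U_G V :: ('a \<Rightarrow> 'f) set). sign_alternating (remove_edge E a b) u \<and> u a + u b = 1)"
proof
  assume "\<exists>u \<in> (U_G V :: ('a \<Rightarrow> 'f) set). nga_mult E u u = edge_vec a b"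
  then obtain u :: "'a \<Rightarrow> 'f" where "u \<in> U_G V" "sign_alternating (remove_edge E a b) u"
    and "u a + u b = 1 \<or> u a + u b = -1"
    using nga_mult_self_eq_edge_vec_iff[OF assms] power2_eq_1_iff by blast
  moreover have "- u \<in> U_G V" "sign_alternating (remove_edge E a b) (- u)"
    using calculation unfolding U_G_def sign_alternating_def by (auto simp: add_eq_0_iff)
  ultimately show "\<exists>u \<in> (U_G V :: ('a \<Rightarrow> 'f) set). sign_alternating (remove_edge E a b) u \<and> u a + u b = 1"
    by (metis minus_add_distrib minus_minus uminus_apply)
next
  assume "\<exists>u \<in> (U_G V :: ('a \<Rightarrow> 'f) set). sign_alternating (remove_edge E a b) u \<and> u a + u b = 1"
  then show "\<exists>u \<in> (U_G V :: ('a \<Rightarrow> 'f) set). nga_mult E u u = edge_vec a b"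
    using nga_mult_self_eq_edge_vec_iff[OF assms] by (metis power_one)
qed

lemma sign_alternating_relpowp:
  assumes "sign_alternating R u" and "(R ^^ n) x y"
  shows "u y = (if even n then u x else - u x)"
  using assms(2)
proof (induction n arbitrary: y)
  case 0
  then show ?case by simp
next
  case (Suc n)
  then obtain z where "(R ^^ n) x z" "R z y"
    by (auto elim: relpowp_Suc_E)
  then show ?case
    using Suc.IH assms(1) unfolding sign_alternating_def by (auto simp: add_eq_0_iff)
qed

lemma sign_alternating_reach:
  assumes "sign_alternating R u" and "reach R x y"
  shows "u y = u x \<or> u y = - u x"
  using assms sign_alternating_relpowp unfolding reach_def rtranclp_power by metis

lemma rtrancl_path_relpowp:
  "rtrancl_path R x xs y \<Longrightarrow> (R ^^ length xs) x y"
  by (induction rule: rtrancl_path.induct) (simp, metis length_Cons relpowp_Suc_I2)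

lemma simple_graph_remove_edge:
  "simple_graph V E \<Longrightarrow> simple_graph V (remove_edge E a b)"
  unfolding simple_graph_def remove_edge_def by (auto simp: insert_commute)

lemma reach_sym:
  assumes "simple_graph V E" and "reach E x y"
  shows "reach E y x"
proof -
  have "symp E"
    using assms(1) unfolding simple_graph_def by (auto intro: sympI)
  then show ?thesis
    using assms(2) symp_rtranclp unfolding reach_def by (metis sympD)
qed

lemma reach_class_eq:
  assumes "simple_graph V E" and "reach E w x"
  shows "{y \<in> V. reach E x y} = {y \<in> V. reach E w y}"
  using assms reach_sym[OF assms(1)] unfolding reach_def by (meson rtranclp_trans)

lemma edge_in_reach_class_iff:
  assumes "simple_graph V E" and "E x y"
  shows "x \<in> {z \<in> V. reach E w z} \<longleftrightarrow> y \<in> {z \<in> V. reach E w z}"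
  using assms unfolding simple_graph_def reach_def
  by (auto intro: rtranclp.rtrancl_into_rtrancl)

lemma components_connected:
  assumes "connected_graph V E"
  shows "components V E = {V}"
  using assms unfolding connected_graph_def components_def by auto

lemma reach_remove_edge_from_ends:
  assumes "connected_graph V E" and "a \<in> V" and "y \<in> V"
  shows "reach (remove_edge E a b) a y \<or> reach (remove_edge E a b) b y"
proof -
  have "E\<^sup>*\<^sup>* a y"
    using assms unfolding connected_graph_def reach_def by blast
  then show ?thesis
  proof (induction rule: rtranclp_induct)
    case base
    then show ?case by (simp add: reach_def)
  next
    case (step y z)
    show ?case
    proof (cases "remove_edge E a b y z")
      case True
      then show ?thesis
        using step.IH unfolding reach_def by (meson rtranclp.rtrancl_into_rtrancl)
    next
      case False
      then have "z = a \<or> z = b"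
        using step.hyps(2) unfolding remove_edge_def by (auto simp: doubleton_eq_iff)
      then show ?thesis
        unfolding reach_def by auto
    qed
  qed
qed

lemma is_bridge_iff_not_reach:
  assumes sg: "simple_graph V E" and cg: "connected_graph V E" and ab: "E a b"
  shows "is_bridge V E a b \<longleftrightarrow> \<not> reach (remove_edge E a b) a b"
proof -
  let ?R = "remove_edge E a b"
  have sgR: "simple_graph V ?R"
    using sg by (rule simple_graph_remove_edge)
  have aV: "a \<in> V" and bV: "b \<in> V"
    using sg ab unfolding simple_graph_def by blast+
  show ?thesis
  proof
    assume "is_bridge V E a b"
    show "\<not> reach ?R a b"
    proof
      assume "reach ?R a b"
      have "reach ?R x y" if "x \<in> V" "y \<in> V" for x y
        using reach_remove_edge_from_ends[OF cg aV] that \<open>reach ?R a b\<close> reach_sym[OF sgR]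
        unfolding reach_def by (meson rtranclp_trans)
      then have "connected_graph V ?R"
        using cg unfolding connected_graph_def by blast
      then have "components V ?R = {V}"
        by (rule components_connected)
      then show False
        using \<open>is_bridge V E a b\<close> components_connected[OF cg] unfolding is_bridge_def by simp
    qed
  next
    assume "\<not> reach ?R a b"
    let ?Ca = "{y \<in> V. reach ?R a y}" and ?Cb = "{y \<in> V. reach ?R b y}"
    have "?Ca \<noteq> ?Cb"
      using \<open>\<not> reach ?R a b\<close> bV unfolding reach_def by auto
    moreover have "{?Ca, ?Cb} \<subseteq> components V ?R"
      using aV bV unfolding components_def by blast
    moreover have "finite (components V ?R)"
      using sg unfolding simple_graph_def components_def
      by (auto intro: finite_subset[of _ "Pow V"])
    ultimately have "2 \<le> card (components V ?R)"
      by (metis card_2_iff card_mono)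
    then show "is_bridge V E a b"
      using ab components_connected[OF cg] unfolding is_bridge_def by simp
  qed
qed

lemma bipartite_reach_class_if_sign_alternating:
  fixes u :: "'a \<Rightarrow> 'b::ab_group_add"
  assumes alt: "sign_alternating R u" and w: "u w \<noteq> - u w"
  shows "bipartite {y \<in> V. reach R w y} (induced R {y \<in> V. reach R w y})"
proof -
  let ?C = "{y \<in> V. reach R w y}"
  let ?A = "{y \<in> ?C. u y = u w}"
  have "x \<in> ?A \<longleftrightarrow> y \<notin> ?A" if "induced R ?C x y" for x y
  proof -
    have "R x y" "x \<in> ?C" "y \<in> ?C"
      using that unfolding induced_def by auto
    then have "u x = u w \<or> u x = - u w" "u y = - u x"
      using sign_alternating_reach[OF alt] alt unfolding sign_alternating_def
      by (auto simp: eq_neg_iff_add_eq_0 add.commute)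
    then show ?thesis
      using w \<open>x \<in> ?C\<close> \<open>y \<in> ?C\<close> by auto
  qed
  then show ?thesis
    unfolding bipartite_def by (intro exI[of _ ?A]) auto
qed

lemma sign_alternating_if_bipartite:
  fixes c :: "'f::field"
  assumes bip: "bipartite C (induced R C)" and "C \<subseteq> V"
    and closed: "\<And>x y. R x y \<Longrightarrow> x \<in> C \<longleftrightarrow> y \<in> C" and "w \<in> C"
  obtains u :: "'a \<Rightarrow> 'f"
  where "u \<in> U_G V" "sign_alternating R u" "u w = c" "\<And>x. x \<notin> C \<Longrightarrow> u x = 0"
proof -
  obtain A where side: "\<And>x y. induced R C x y \<Longrightarrow> x \<in> A \<longleftrightarrow> y \<notin> A"
    using bip unfolding bipartite_def by blast
  define s where "s = (if w \<in> A then c else - c)"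
  define u where "u x = (if x \<in> C then if x \<in> A then s else - s else 0)" for x
  have "u x + u y = 0" if "R x y" for x y
    using that closed side unfolding induced_def u_def by (cases "x \<in> C") auto
  then have "sign_alternating R u"
    unfolding sign_alternating_def by blast
  moreover have "u \<in> U_G V"
    using \<open>C \<subseteq> V\<close> unfolding U_G_def u_def by auto
  moreover have "u w = c"
    using \<open>w \<in> C\<close> unfolding u_def s_def by auto
  ultimately show thesis
    using that unfolding u_def by auto
qed

lemma is_cycle_close_path:
  assumes path: "rtrancl_path E a ys b" and "distinct (a # ys)" and "2 \<le> length ys" and "E b a"
  shows "is_cycle E (a # ys)" and "edge_in_cycle (a # ys) a b"
proof -
  have last: "(a # ys) ! length ys = b"
    using rtrancl_path_last[OF path] \<open>2 \<le> length ys\<close> by (auto simp: last_conv_nth nth_Cons')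
  show "is_cycle E (a # ys)"
    unfolding is_cycle_def
  proof (intro conjI allI impI)
    fix i
    assume "i < length (a # ys)"
    then consider "i < length ys" | "i = length ys"
      by fastforce
    then show "E ((a # ys) ! i) ((a # ys) ! ((i + 1) mod length (a # ys)))"
    proof cases
      case 1
      then show ?thesis
        using rtrancl_path_nth[OF path] by simp
    next
      case 2
      then show ?thesis
        using last \<open>E b a\<close> by simp
    qed
  qed (use assms in auto)
  show "edge_in_cycle (a # ys) a b"
    unfolding edge_in_cycle_def using last by (intro exI[of _ "length ys"]) auto
qed

lemma cycle_edge_eq_iff:
  assumes cyc: "is_cycle E c" and i: "i < length c" and k: "k < length c"
  shows "{c ! k, c ! (Suc k mod length c)} = {c ! i, c ! (Suc i mod length c)} \<longleftrightarrow> k = i"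
proof
  let ?n = "length c"
  assume eq: "{c ! k, c ! (Suc k mod ?n)} = {c ! i, c ! (Suc i mod ?n)}"
  have "distinct c" and n: "3 \<le> ?n"
    using cyc unfolding is_cycle_def by auto
  have nth_eq: "c ! p = c ! q \<longleftrightarrow> p = q" if "p < ?n" "q < ?n" for p q
    using nth_eq_iff_index_eq[OF \<open>distinct c\<close> that] .
  from eq consider "c ! k = c ! i" | "c ! k = c ! (Suc i mod ?n)" "c ! (Suc k mod ?n) = c ! i"
    by (auto simp: doubleton_eq_iff)
  then show "k = i"
  proof cases
    case 1
    then show ?thesis
      using nth_eq i k by blast
  next
    case 2
    have "0 < ?n"
      using i by linarith
    then have lt: "Suc i mod ?n < ?n" "Suc k mod ?n < ?n"
      by simp_all
    have "k = Suc i mod ?n"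
      using 2(1) nth_eq[OF k lt(1)] by simp
    moreover have "Suc k mod ?n = i"
      using 2(2) nth_eq[OF lt(2) i] by simp
    ultimately have "Suc (Suc i) mod ?n = i"
      by (simp add: mod_Suc_eq)
    then show ?thesis
      using i n by (auto simp: mod_if split: if_splits)
  qed
qed simp

lemma cycle_walk_avoiding_edge:
  assumes cyc: "is_cycle E c" and i: "i < length c"
  shows "(remove_edge E (c ! i) (c ! (Suc i mod length c)) ^^ (length c - 1))
    (c ! (Suc i mod length c)) (c ! i)"
proof -
  let ?n = "length c" and ?R = "remove_edge E (c ! i) (c ! (Suc i mod length c))"
  have walk: "(?R ^^ j) (c ! (Suc i mod ?n)) (c ! ((Suc i + j) mod ?n))" if "j < ?n" for j
    using that
  proof (induction j)
    case 0
    then show ?case by simp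
  next
    case (Suc j)
    let ?k = "(Suc i + j) mod ?n"
    have "?k < ?n" "?k \<noteq> i"
      using i Suc.prems by (auto simp: mod_if split: if_splits)
    then have "?R (c ! ?k) (c ! (Suc ?k mod ?n))"
      using cyc cycle_edge_eq_iff[OF cyc i] unfolding is_cycle_def remove_edge_def by auto
    moreover have "Suc ?k mod ?n = (Suc i + Suc j) mod ?n"
      by (simp add: mod_Suc_eq)
    ultimately show ?case
      using Suc by (auto intro: relpowp_Suc_I)
  qed
  have "Suc i + (?n - 1) = i + ?n"
    using i by simp
  then show ?thesis
    using walk[of "?n - 1"] i by simp
qed

lemma odd_cycle_if_sign_alternating_reach:
  fixes u :: "'a \<Rightarrow> 'f::field"
  assumes sg: "simple_graph V E" and ab: "E a b"
    and alt: "sign_alternating (remove_edge E a b) u" and sum: "u a + u b = 1"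
    and reach: "reach (remove_edge E a b) a b"
  shows "in_odd_cycle E a b"
proof -
  let ?R = "remove_edge E a b"
  obtain xs where "rtrancl_path ?R a xs b"
    using reach unfolding reach_def rtranclp_eq_rtrancl_path by blast
  then obtain ys where path: "rtrancl_path ?R a ys b" and distinct_path: "distinct (a # ys)"
    by (rule rtrancl_path_distinct)
  have "even (length ys)"
    using sign_alternating_relpowp[OF alt rtrancl_path_relpowp[OF path]] sum
    by (auto split: if_splits)
  moreover have "length ys \<noteq> 0"
    using path ab sg unfolding simple_graph_def by (auto elim: rtrancl_path.cases)
  ultimately have length_ys: "2 \<le> length ys"
    by (simp add: dvd_imp_le)
  have path_E: "rtrancl_path E a ys b"
    using path by (rule rtrancl_path_mono) (simp add: remove_edge_def)
  have "E b a"
    using sg ab unfolding simple_graph_def by blast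
  note is_cycle_close_path[OF path_E distinct_path length_ys \<open>E b a\<close>]
  then show ?thesis
    unfolding in_odd_cycle_def using \<open>even (length ys)\<close> by (intro exI[of _ "a # ys"]) simp
qed

lemma bipartite_remove_edge_if_sign_alternating_reach:
  fixes u :: "'a \<Rightarrow> 'f::field"
  assumes sg: "simple_graph V E" and cg: "connected_graph V E" and ab: "E a b"
    and alt: "sign_alternating (remove_edge E a b) u" and sum: "u a + u b = 1"
    and reach: "reach (remove_edge E a b) a b"
  shows "bipartite V (remove_edge E a b)"
proof -
  let ?R = "remove_edge E a b"
  have "a \<in> V"
    using sg ab unfolding simple_graph_def by blast
  have "u b = u a"
    using sign_alternating_reach[OF alt reach] sum by auto
  then have "u a \<noteq> - u a"
    using sum by auto
  then have "bipartite {y \<in> V. reach ?R a y} (induced ?R {y \<in> V. reach ?R a y})"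
    by (rule bipartite_reach_class_if_sign_alternating[OF alt])
  moreover have "reach ?R a y" if "y \<in> V" for y
    using reach_remove_edge_from_ends[OF cg \<open>a \<in> V\<close> that] reach unfolding reach_def
    by (meson rtranclp_trans)
  then have "{y \<in> V. reach ?R a y} = V"
    by auto
  moreover have "induced ?R V = ?R"
    using simple_graph_remove_edge[OF sg] unfolding simple_graph_def induced_def by blast
  ultimately show ?thesis
    by simp
qed

lemma bipartite_component_if_sign_alternating:
  fixes u :: "'a \<Rightarrow> 'f::field"
  assumes two: "(2::'f) \<noteq> 0" and "a \<in> V" and "b \<in> V"
    and alt: "sign_alternating R u" and sum: "u a + u b = 1"
  shows "\<exists>C \<in> components V R. bipartite C (induced R C)"
proof -
  obtain w where "w \<in> V" and "u w \<noteq> 0"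
  proof (cases "u a = 0")
    case True
    then show thesis
      using that[of b] sum \<open>b \<in> V\<close> by simp
  next
    case False
    then show thesis
      using that[of a] \<open>a \<in> V\<close> by simp
  qed
  then have "u w \<noteq> - u w"
    using two by (auto simp: eq_neg_iff_add_eq_0 simp flip: mult_2)
  then have "bipartite {y \<in> V. reach R w y} (induced R {y \<in> V. reach R w y})"
    by (rule bipartite_reach_class_if_sign_alternating[OF alt])
  moreover have "{y \<in> V. reach R w y} \<in> components V R"
    using \<open>w \<in> V\<close> unfolding components_def by blast
  ultimately show ?thesis
    by blast
qed

lemma odd_cycle_or_bipartite_component_if_sign_alternating:
  fixes u :: "'a \<Rightarrow> 'f::field"
  assumes sg: "simple_graph V E" and cg: "connected_graph V E" and ab: "E a b"
    and two: "(2::'f) \<noteq> 0"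
    and alt: "sign_alternating (remove_edge E a b) u" and sum: "u a + u b = 1"
  shows "(in_odd_cycle E a b \<and> bipartite V (remove_edge E a b)) \<or>
    (\<not> reach (remove_edge E a b) a b \<and>
      (\<exists>C \<in> components V (remove_edge E a b). bipartite C (induced (remove_edge E a b) C)))"
proof (cases "reach (remove_edge E a b) a b")
  case True
  then show ?thesis
    using odd_cycle_if_sign_alternating_reach[OF sg ab alt sum]
      bipartite_remove_edge_if_sign_alternating_reach[OF sg cg ab alt sum] by simp
next
  case False
  have "a \<in> V" "b \<in> V"
    using sg ab unfolding simple_graph_def by blast+
  then show ?thesis
    using False bipartite_component_if_sign_alternating[OF two _ _ alt sum] by simp
qed

lemma exists_sign_alternating_if_odd_cycle:
  assumes sg: "simple_graph V E" and ab: "E a b" and two: "(2::'f::field) \<noteq> 0"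
    and odd_cycle: "in_odd_cycle E a b" and bip: "bipartite V (remove_edge E a b)"
  shows "\<exists>u \<in> (U_G V :: ('a \<Rightarrow> 'f) set). sign_alternating (remove_edge E a b) u \<and> u a + u b = 1"
proof -
  let ?R = "remove_edge E a b"
  obtain c i where cyc: "is_cycle E c" and "odd (length c)" and i: "i < length c"
    and edge: "{c ! i, c ! (Suc i mod length c)} = {a, b}"
    using odd_cycle unfolding in_odd_cycle_def edge_in_cycle_def by auto
  have "?R = remove_edge E (c ! i) (c ! (Suc i mod length c))"
    using edge unfolding remove_edge_def by simp
  then have walk: "(?R ^^ (length c - 1)) (c ! (Suc i mod length c)) (c ! i)"
    using cycle_walk_avoiding_edge[OF cyc i] by simp
  have sgR: "simple_graph V ?R"
    using sg by (rule simple_graph_remove_edge)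
  then have "induced ?R V = ?R"
    unfolding simple_graph_def induced_def by blast
  then have bip_induced: "bipartite V (induced ?R V)"
    using bip by simp
  have closed: "x \<in> V \<longleftrightarrow> y \<in> V" if "?R x y" for x y
    using sgR that unfolding simple_graph_def by blast
  have "a \<in> V"
    using sg ab unfolding simple_graph_def by blast
  obtain u :: "'a \<Rightarrow> 'f" where "u \<in> U_G V" and alt: "sign_alternating ?R u" and "u a = 1 / 2"
    using sign_alternating_if_bipartite[OF bip_induced subset_refl closed \<open>a \<in> V\<close>, where c = "1 / 2"]
    by blast
  have "u (c ! i) = u (c ! (Suc i mod length c))"
    using sign_alternating_relpowp[OF alt walk] \<open>odd (length c)\<close> by simp
  then have "u b = u a"
    using edge by (auto simp: doubleton_eq_iff)
  moreover have "(1 / 2 :: 'f) + 1 / 2 = 1"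
    using two by (simp add: add_divide_distrib[symmetric])
  ultimately have "u a + u b = 1"
    using \<open>u a = 1 / 2\<close> by (simp only:)
  then show ?thesis
    using \<open>u \<in> U_G V\<close> alt by blast
qed

lemma exists_sign_alternating_if_bipartite_component:
  assumes sg: "simple_graph V E" and cg: "connected_graph V E" and ab: "E a b"
    and not_reach: "\<not> reach (remove_edge E a b) a b"
    and C: "C \<in> components V (remove_edge E a b)"
    and bip: "bipartite C (induced (remove_edge E a b) C)"
  shows "\<exists>u \<in> (U_G V :: ('a \<Rightarrow> 'f::field) set). sign_alternating (remove_edge E a b) u \<and> u a + u b = 1"
proof -
  let ?R = "remove_edge E a b"
  have sgR: "simple_graph V ?R"
    using sg by (rule simple_graph_remove_edge)
  have "a \<in> V" "b \<in> V"
    using sg ab unfolding simple_graph_def by blast+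
  obtain x where "x \<in> V" and C_eq: "C = {y \<in> V. reach ?R x y}"
    using C unfolding components_def by blast
  have root: "\<exists>u \<in> (U_G V :: ('a \<Rightarrow> 'f) set). sign_alternating ?R u \<and> u w + u w' = 1"
    if "reach ?R w x" and "\<not> reach ?R w w'" and "w \<in> V" for w w'
  proof -
    have C_w: "C = {y \<in> V. reach ?R w y}"
      using C_eq reach_class_eq[OF sgR that(1)] by simp
    have "C \<subseteq> V" "w \<in> C"
      using \<open>w \<in> V\<close> unfolding C_w reach_def by auto
    moreover have closed: "y \<in> C \<longleftrightarrow> z \<in> C" if "?R y z" for y z
      unfolding C_w using edge_in_reach_class_iff[OF sgR that] .
    obtain u :: "'a \<Rightarrow> 'f"
      where "u \<in> U_G V" "sign_alternating ?R u" "u w = 1" "\<And>y. y \<notin> C \<Longrightarrow> u y = 0"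
      using sign_alternating_if_bipartite[OF bip \<open>C \<subseteq> V\<close> closed \<open>w \<in> C\<close>, where c = 1] by blast
    moreover have "w' \<notin> C"
      using \<open>\<not> reach ?R w w'\<close> unfolding C_w by blast
    ultimately show ?thesis
      by auto
  qed
  consider "reach ?R a x" | "reach ?R b x"
    using reach_remove_edge_from_ends[OF cg \<open>a \<in> V\<close> \<open>x \<in> V\<close>] by blast
  then show ?thesis
  proof cases
    case 1
    then show ?thesis
      using root not_reach \<open>a \<in> V\<close> by blast
  next
    case 2
    have "\<not> reach ?R b a"
      using not_reach reach_sym[OF sgR] by blast
    then show ?thesis
      using root[OF 2 _ \<open>b \<in> V\<close>] by (simp add: add.commute)
  qed
qed

theorem proposition6p1:
  fixes V :: "'a set" and E :: "'a \<Rightarrow> 'a \<Rightarrow> bool" and a b :: 'a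
  assumes "simple_graph V E" and "connected_graph V E"
    and "CHAR('f::field) \<noteq> 2"
    and "E a b"
  shows "(\<exists>u \<in> (U_G V :: ('a \<Rightarrow> 'f) set). nga_mult E u u = edge_vec a b) \<longleftrightarrow>
    ((in_odd_cycle E a b \<and> bipartite V (remove_edge E a b)) \<or>
     (is_bridge V E a b \<and>
       (\<exists>C \<in> components V (remove_edge E a b). bipartite C (induced (remove_edge E a b) C))))"
proof -
  note sg = assms(1) and cg = assms(2) and ab = assms(4)
  have two: "(2::'f) \<noteq> 0"
    using assms(3) by (rule two_neq_zero_if_CHAR_neq_2)
  show ?thesis
    unfolding square_eq_edge_vec_iff[OF sg ab] is_bridge_iff_not_reach[OF sg cg ab]
    using odd_cycle_or_bipartite_component_if_sign_alternating[OF sg cg ab two]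
      exists_sign_alternating_if_odd_cycle[OF sg ab two]
      exists_sign_alternating_if_bipartite_component[OF sg cg ab]
    by blast
qed

end
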